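(* Let $P$ be a polyhedral map and $O$ a c3-lsp-operation. The following are equivalent: (1) $O$ increases the symmetry of $P$, i.e. $|\mathrm{Aut}(B_{O(P)})|>|\mathrm{Aut}(B_P)|$; (2) there exists an automorphism of $B_{O(P)}$ that maps some chamber to a chamber in a different class; (3) there exists an automorphism of $B_{O(P)}$ that maps every chamber to a chamber in a different class.
   Context: A polyhedral map is a 3-connected graph embedded in a closed orientable surface such that every face is an open disc and the closures of any two faces have connected intersection. The barycentric subdivision $B_P$ of $P$ is obtained by adding a vertex inside every face and on every edge and joining each face-vertex to all vertices and edge-vertices on that face's boundary, so all faces are triangles (chambers); original vertices get colour 0, edge-vertices colour 1, face-vertices colour 2; $\mathrm{Aut}(B_P)$ is its group of colour-preserving automorphisms. An lsp-operation is a 2-connected plane map $O$ with vertex colouring $c:V\to\{0,1,2\}$ and a designated outer face containing three marked vertices $v_0,v_1,v_2$ such that: every inner face is a triangle (a chamber of $O$); no edge joins two vertices of the same colour; every colour-1 vertex not on the outer face has degree 4; every colour-1 vertex on the outer face other than $v_0,v_1,v_2$ has degree 3; $c(v_0)\neq1$, $c(v_2)\neq1$; and if $c(v_1)=1$ then $v_1$ has degree 2. Applying $O$ to $P$: into every chamber of $B_P$ glue a copy of $O$ or its mirror image (according to the orientation of the chamber, adjacent chambers receiving mirror-image copies), identifying $v_i$ with the colour-$i$ vertex of the chamber and the outer-face path of $O$ between $v_i$ and $v_j$ with the chamber edge between its colour-$i$ and colour-$j$ vertices; the result is the barycentric subdivision $B_{O(P)}$ of a map $O(P)$. $O$ is a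 c3-lsp-operation if $O(P)$ is polyhedral for all polyhedral $P$. Each chamber of $B_{O(P)}$ is a copy of a chamber $y$ of $O$; the class of $y$ is the set of all chambers of $B_{O(P)}$ that are copies of $y$. *)

theory Defs
  imports Main
begin

text \<open>Maps are encoded by their flag systems (= chamber systems of their barycentric
subdivisions): a finite set of chambers F and three involutions s 0, s 1, s 2,
where s i x is the chamber sharing with x the side opposite the colour-i vertex.\<close>

type_synonym 'f fsys = "nat \<Rightarrow> 'f \<Rightarrow> 'f"

definition step :: "'f set \<Rightarrow> 'f fsys \<Rightarrow> nat set \<Rightarrow> ('f \<times> 'f) set" where
  "step F s I = {(x, s i x) | x i. x \<in> F \<and> i \<in> I}"

definition orb :: "'f set \<Rightarrow> 'f fsys \<Rightarrow> nat set \<Rightarrow> 'f \<Rightarrow> 'f set" where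
  "orb F s I x = {y. (x, y) \<in> (step F s I)\<^sup>*}"

text \<open>A map on a closed surface (connected, every edge has four flags).\<close>
definition is_map :: "'f set \<Rightarrow> 'f fsys \<Rightarrow> bool" where
  "is_map F s \<longleftrightarrow> finite F \<and> F \<noteq> {} \<and>
     (\<forall>i<3. \<forall>x\<in>F. s i x \<in> F \<and> s i (s i x) = x \<and> s i x \<noteq> x) \<and>
     (\<forall>x\<in>F. s 0 (s 2 x) = s 2 (s 0 x) \<and> s 0 (s 2 x) \<noteq> x) \<and>
     (\<forall>x\<in>F. \<forall>y\<in>F. (x, y) \<in> (step F s {0,1,2})\<^sup>*)"

definition orientable :: "'f set \<Rightarrow> 'f fsys \<Rightarrow> bool" where
  "orientable F s \<longleftrightarrow> (\<exists>p :: 'f \<Rightarrow> bool. \<forall>x\<in>F. \<forall>i<3. p (s i x) \<noteq> p x)"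

definition vertices :: "'f set \<Rightarrow> 'f fsys \<Rightarrow> 'f set set" where
  "vertices F s = orb F s {1,2} ` F"

definition edges :: "'f set \<Rightarrow> 'f fsys \<Rightarrow> 'f set set" where
  "edges F s = orb F s {0,2} ` F"

definition faces :: "'f set \<Rightarrow> 'f fsys \<Rightarrow> 'f set set" where
  "faces F s = orb F s {0,1} ` F"

definition ends :: "'f set \<Rightarrow> 'f fsys \<Rightarrow> 'f set \<Rightarrow> 'f set set" where
  "ends F s e = {v \<in> vertices F s. v \<inter> e \<noteq> {}}"

text \<open>degree of a vertex (loops counted twice)\<close>
definition deg :: "'f set \<Rightarrow> nat" where
  "deg v = card v div 2"

text \<open>The subgraph with vertex set W and edge set Es is connected (the empty graph counts as connected).\<close>
definition sub_connected :: "'f set \<Rightarrow> 'f fsys \<Rightarrow> 'f set set \<Rightarrow> 'f set set \<Rightarrow> bool" where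
  "sub_connected F s W Es \<longleftrightarrow>
     (\<forall>u\<in>W. \<forall>w\<in>W. (u, w) \<in> {(a, b). a \<in> W \<and> b \<in> W \<and>
          (\<exists>e\<in>Es. a \<in> ends F s e \<and> b \<in> ends F s e)}\<^sup>*)"

definition k_connected :: "nat \<Rightarrow> 'f set \<Rightarrow> 'f fsys \<Rightarrow> bool" where
  "k_connected k F s \<longleftrightarrow> card (vertices F s) > k \<and>
     (\<forall>S \<subseteq> vertices F s. card S < k \<longrightarrow>
        sub_connected F s (vertices F s - S) {e \<in> edges F s. ends F s e \<inter> S = {}})"

definition simple_graph :: "'f set \<Rightarrow> 'f fsys \<Rightarrow> bool" where
  "simple_graph F s \<longleftrightarrow> (\<forall>e\<in>edges F s. card (ends F s e) = 2) \<and>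
     (\<forall>e\<in>edges F s. \<forall>e'\<in>edges F s. ends F s e = ends F s e' \<longrightarrow> e = e')"

definition face_vertices :: "'f set \<Rightarrow> 'f fsys \<Rightarrow> 'f set \<Rightarrow> 'f set set" where
  "face_vertices F s f = {v \<in> vertices F s. v \<inter> f \<noteq> {}}"

definition face_edges :: "'f set \<Rightarrow> 'f fsys \<Rightarrow> 'f set \<Rightarrow> 'f set set" where
  "face_edges F s f = {e \<in> edges F s. e \<inter> f \<noteq> {}}"

definition polyhedral :: "'f set \<Rightarrow> 'f fsys \<Rightarrow> bool" where
  "polyhedral F s \<longleftrightarrow> is_map F s \<and> orientable F s \<and> simple_graph F s \<and> k_connected 3 F s \<and>
     (\<forall>f\<in>faces F s. \<forall>g\<in>faces F s. f \<noteq> g \<longrightarrow>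
        sub_connected F s (face_vertices F s f \<inter> face_vertices F s g)
                          (face_edges F s f \<inter> face_edges F s g))"

text \<open>Colour-preserving automorphisms of the barycentric subdivision = automorphisms of the
chamber system (extended by the identity outside the carrier).\<close>
definition aut :: "'f set \<Rightarrow> 'f fsys \<Rightarrow> ('f \<Rightarrow> 'f) set" where
  "aut F s = {\<phi>. bij_betw \<phi> F F \<and> (\<forall>x. x \<notin> F \<longrightarrow> \<phi> x = x) \<and>
                 (\<forall>i<3. \<forall>x\<in>F. \<phi> (s i x) = s i (\<phi> x))}"

text \<open>Plane map: map on the sphere (orientable, Euler characteristic 2).\<close>
definition plane_map :: "'f set \<Rightarrow> 'f fsys \<Rightarrow> bool" where
  "plane_map F s \<longleftrightarrow> is_map F s \<and> orientable F s \<and>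
     int (card (vertices F s)) - int (card (edges F s)) + int (card (faces F s)) = 2"

definition lsp_operation :: "'o set \<Rightarrow> 'o fsys \<Rightarrow> ('o set \<Rightarrow> nat) \<Rightarrow> 'o set \<Rightarrow>
    'o set \<Rightarrow> 'o set \<Rightarrow> 'o set \<Rightarrow> bool" where
  "lsp_operation G t c outer v0 v1 v2 \<longleftrightarrow>
     plane_map G t \<and> k_connected 2 G t \<and>
     outer \<in> faces G t \<and>
     v0 \<in> vertices G t \<and> v1 \<in> vertices G t \<and> v2 \<in> vertices G t \<and>
     v0 \<noteq> v1 \<and> v1 \<noteq> v2 \<and> v0 \<noteq> v2 \<and>
     v0 \<inter> outer \<noteq> {} \<and> v1 \<inter> outer \<noteq> {} \<and> v2 \<inter> outer \<noteq> {} \<and>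
     (\<forall>v\<in>vertices G t. c v < 3) \<and>
     (\<forall>y\<in>faces G t - {outer}. card y = 6) \<and>
     (\<forall>e\<in>edges G t. card (ends G t e) = 2 \<and>
        (\<forall>a\<in>ends G t e. \<forall>b\<in>ends G t e. a \<noteq> b \<longrightarrow> c a \<noteq> c b)) \<and>
     (\<forall>v\<in>vertices G t. c v = 1 \<and> v \<inter> outer = {} \<longrightarrow> deg v = 4) \<and>
     (\<forall>v\<in>vertices G t. c v = 1 \<and> v \<inter> outer \<noteq> {} \<and> v \<notin> {v0, v1, v2} \<longrightarrow> deg v = 3) \<and>
     c v0 \<noteq> 1 \<and> c v2 \<noteq> 1 \<and> (c v1 = 1 \<longrightarrow> deg v1 = 2)"

text \<open>Chambers of O = inner faces.\<close>
definition op_chambers :: "'o set \<Rightarrow> 'o fsys \<Rightarrow> 'o set \<Rightarrow> 'o set set" where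
  "op_chambers G t outer = faces G t - {outer}"

text \<open>A flag of chamber y lying on the side of y opposite its colour-i vertex.\<close>
definition opp_flag :: "'o set \<Rightarrow> 'o fsys \<Rightarrow> ('o set \<Rightarrow> nat) \<Rightarrow> 'o set \<Rightarrow> nat \<Rightarrow> 'o" where
  "opp_flag G t c y i = (SOME x. x \<in> y \<and> (\<forall>w\<in>ends G t (orb G t {0,2} x). c w \<noteq> i))"

text \<open>Walking along the outer face without passing through a marked vertex: the components
are the three outer paths between the marked vertices.\<close>
definition bstep :: "'o set \<Rightarrow> 'o fsys \<Rightarrow> 'o set \<Rightarrow> 'o set \<Rightarrow> 'o set \<Rightarrow> 'o set \<Rightarrow> ('o \<times> 'o) set" where
  "bstep G t outer v0 v1 v2 =
     {(x, t 0 x) | x. x \<in> outer} \<union>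
     {(x, t 1 x) | x. x \<in> outer \<and> orb G t {1,2} x \<notin> {v0, v1, v2}}"

text \<open>For an outer flag z, the index k such that the outer path containing z's edge is the
path between the two marked vertices other than v_k.\<close>
definition path_label :: "'o set \<Rightarrow> 'o fsys \<Rightarrow> 'o set \<Rightarrow> 'o set \<Rightarrow> 'o set \<Rightarrow> 'o set \<Rightarrow> 'o \<Rightarrow> nat" where
  "path_label G t outer v0 v1 v2 z =
     (THE k. k < 3 \<and> [v0, v1, v2] ! k \<notin>
        {orb G t {1,2} w | w. (z, w) \<in> (bstep G t outer v0 v1 v2)\<^sup>*})"

text \<open>Chamber system of B_{O(P)}: chambers are pairs (chamber of P, chamber of O).\<close>
definition op_sys :: "'f fsys \<Rightarrow> 'o set \<Rightarrow> 'o fsys \<Rightarrow> ('o set \<Rightarrow> nat) \<Rightarrow> 'o set \<Rightarrow>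
    'o set \<Rightarrow> 'o set \<Rightarrow> 'o set \<Rightarrow> ('f \<times> 'o set) fsys" where
  "op_sys s G t c outer v0 v1 v2 i fy =
     (let f = fst fy; y = snd fy; z = t 2 (opp_flag G t c y i); y' = orb G t {0,1} z in
      if y' \<noteq> outer then (f, y')
      else (s (path_label G t outer v0 v1 v2 z) f, y))"

definition c3_lsp_operation :: "'o set \<Rightarrow> 'o fsys \<Rightarrow> ('o set \<Rightarrow> nat) \<Rightarrow> 'o set \<Rightarrow>
    'o set \<Rightarrow> 'o set \<Rightarrow> 'o set \<Rightarrow> bool" where
  "c3_lsp_operation G t c outer v0 v1 v2 \<longleftrightarrow> lsp_operation G t c outer v0 v1 v2 \<and>
     (\<forall>(F :: nat set) (s :: nat fsys). polyhedral F s \<longrightarrow>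
        polyhedral (F \<times> op_chambers G t outer) (op_sys s G t c outer v0 v1 v2))"

end

theory Submission
  imports Defs "HOL-Library.FuncSet"
begin

(* A chamber of B_{O(P)} is a pair (f, y) of a chamber f of B_P and an inner chamber y of O, and
   its class is y.  Crossing a side of y leads either to a neighbouring chamber of O, keeping f,
   or through the outer face of O to (s_k f, y), and every k < 3 occurs.  As the inner chambers
   of O are connected, an automorphism fixing every class acts on all classes by one and the same
   permutation of the chambers of B_P, which commutes with every s_k.  So the class-preserving
   automorphisms are exactly the lifts of Aut(B_P), and (1) <-> (2) follows by counting.  The
   class of a neighbour of a chamber depends only on the class of the chamber, so the chambers
   whose class a given automorphism preserves form a set closed under adjacency, which is empty
   or everything: this is (2) <-> (3).  The facts about O used here are obtained by applying O
   to the tetrahedron. *)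

declare One_nat_def [simp del]

section \<open>Flag systems\<close>

lemma step_iff: "(x, y) \<in> step F s I \<longleftrightarrow> x \<in> F \<and> (\<exists>i\<in>I. y = s i x)"
  unfolding step_def by blast

lemma step_mono: "I \<subseteq> J \<Longrightarrow> step F s I \<subseteq> step F s J"
  unfolding step_def by blast

lemma rtrancl_step_snoc:
  "(x, y) \<in> (step F s I)\<^sup>* \<Longrightarrow> y \<in> F \<Longrightarrow> i \<in> I \<Longrightarrow> (x, s i y) \<in> (step F s I)\<^sup>*"
  by (rule rtrancl_into_rtrancl) (auto simp: step_iff)

lemma rtrancl_step_closed:
  assumes "(x, y) \<in> (step F s I)\<^sup>*" "x \<in> S" "\<And>i z. i \<in> I \<Longrightarrow> z \<in> S \<Longrightarrow> s i z \<in> S"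
  shows "y \<in> S"
  using assms(1) by (induction rule: rtrancl_induct) (use assms(2,3) in \<open>auto simp: step_iff\<close>)

lemma orb_eqI:
  assumes "x \<in> Q"
    and "\<And>q i. q \<in> Q \<Longrightarrow> i \<in> I \<Longrightarrow> s i q \<in> Q"
    and "\<And>q. q \<in> Q \<Longrightarrow> (x, q) \<in> (step F s I)\<^sup>*"
  shows "orb F s I x = Q"
  using assms rtrancl_step_closed[of x _ F s I Q] unfolding orb_def by blast

lemma sub_connectedI:
  assumes "\<And>u w. u \<in> W \<Longrightarrow> w \<in> W \<Longrightarrow> u \<noteq> w \<Longrightarrow> \<exists>e\<in>Es. u \<in> ends F s e \<and> w \<in> ends F s e"
  shows "sub_connected F s W Es"
  unfolding sub_connected_def
proof (intro ballI)
  fix u w assume "u \<in> W" "w \<in> W"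
  with assms show "(u, w) \<in> {(a, b). a \<in> W \<and> b \<in> W \<and> (\<exists>e\<in>Es. a \<in> ends F s e \<and> b \<in> ends F s e)}\<^sup>*"
    by (cases "u = w") (auto intro: r_into_rtrancl)
qed

lemma less_3_cases: "(i::nat) < 3 \<Longrightarrow> i = 0 \<or> i = 1 \<or> i = 2"
  by (auto simp: One_nat_def)

lemma finite_aut:
  assumes "finite X"
  shows "finite (aut X s)"
proof -
  have "aut X s \<subseteq> (\<lambda>g x. if x \<in> X then g x else x) ` (X \<rightarrow>\<^sub>E X)"
  proof
    fix \<phi> assume "\<phi> \<in> aut X s"
    then have "restrict \<phi> X \<in> X \<rightarrow>\<^sub>E X" "\<phi> = (\<lambda>x. if x \<in> X then restrict \<phi> X x else x)"
      unfolding aut_def by (auto simp: bij_betw_apply)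
    then show "\<phi> \<in> (\<lambda>g x. if x \<in> X then g x else x) ` (X \<rightarrow>\<^sub>E X)" by blast
  qed
  moreover have "finite (X \<rightarrow>\<^sub>E X)" using assms by (simp add: finite_PiE)
  ultimately show ?thesis by (meson finite_imageI finite_subset)
qed

section \<open>The tetrahedron\<close>

(* The flags of the tetrahedron on the vertices 0, 1, 2, 3 are the orderings (a, b, c, d) of
   these vertices, read as vertex a, edge ab and the face opposite d, and s_i swaps the entries
   i and i + 1.  They are coded by base-4 numerals because c3_lsp_operation only quantifies over
   maps whose flags are natural numbers.  For i >= 3, s_i moves every flag out of the carrier. *)

definition tet_code :: "nat \<times> nat \<times> nat \<times> nat \<Rightarrow> nat" where
  "tet_code = (\<lambda>(a, b, c, d). a + 4 * (b + 4 * (c + 4 * d)))"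

definition tet_decode :: "nat \<Rightarrow> nat \<times> nat \<times> nat \<times> nat" where
  "tet_decode n = (n mod 4, n div 4 mod 4, n div 4 div 4 mod 4, n div 4 div 4 div 4)"

definition tet_perms :: "(nat \<times> nat \<times> nat \<times> nat) set" where
  "tet_perms = {(a, b, c, d). a < 4 \<and> b < 4 \<and> c < 4 \<and> d < 4 \<and> distinct [a, b, c, d]}"

definition tet_flags :: "nat set" where
  "tet_flags = tet_code ` tet_perms"

definition tet_sys :: "nat fsys" where
  "tet_sys i n = (case tet_decode n of (a, b, c, d) \<Rightarrow>
     if i = 0 then tet_code (b, a, c, d) else if i = 1 then tet_code (a, c, b, d)
     else if i = 2 then tet_code (a, b, d, c) else n + 256)"

lemma tet_decode_code:
  assumes "a < 4" "b < 4" "c < 4"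
  shows "tet_decode (tet_code (a, b, c, d)) = (a, b, c, d)"
proof -
  have "(x + 4 * k) mod 4 = x" "(x + 4 * k) div 4 = k" if "x < 4" for x k :: nat
    using that by simp_all
  with assms show ?thesis
    unfolding tet_decode_def tet_code_def by (simp only: split)
qed

lemma tet_perms_swap:
  assumes "(a, b, c, d) \<in> tet_perms"
  shows "(b, a, c, d) \<in> tet_perms" "(a, c, b, d) \<in> tet_perms" "(a, b, d, c) \<in> tet_perms"
  using assms by (auto simp: tet_perms_def)

lemma tet_perms_set:
  assumes "(a, b, c, d) \<in> tet_perms"
  shows "{a, b, c, d} = {..<4}"
proof (rule card_subset_eq)
  show "{a, b, c, d} \<subseteq> {..<4}" "card {a, b, c, d} = card {..<4::nat}"
    using assms by (auto simp: tet_perms_def)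
qed simp

lemma tet_perms_extend:
  assumes "a < 4" "b < 4" "a \<noteq> b"
  obtains c d where "(a, b, c, d) \<in> tet_perms"
proof -
  have "card ({..<4} - {a, b}) = 2"
    using assms by (subst card_Diff_subset) auto
  then obtain c d where "{..<4} - {a, b} = {c, d}" "c \<noteq> d"
    by (auto simp: card_2_iff)
  then have "(a, b, c, d) \<in> tet_perms"
    using assms unfolding tet_perms_def by (auto simp: set_eq_iff)
  then show thesis ..
qed

lemma tet_decode_code_perm: "p \<in> tet_perms \<Longrightarrow> tet_decode (tet_code p) = p"
  by (cases p) (simp add: tet_perms_def tet_decode_code)

lemma inj_on_tet_code: "inj_on tet_code tet_perms"
  by (rule inj_on_inverseI[of _ tet_decode]) (rule tet_decode_code_perm)

lemma tet_code_eq_iff: "p \<in> tet_perms \<Longrightarrow> q \<in> tet_perms \<Longrightarrow> tet_code p = tet_code q \<longleftrightarrow> p = q"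
  by (rule inj_on_eq_iff[OF inj_on_tet_code])

lemma tet_sys_code:
  assumes "(a, b, c, d) \<in> tet_perms"
  shows "tet_sys 0 (tet_code (a, b, c, d)) = tet_code (b, a, c, d)"
    and "tet_sys 1 (tet_code (a, b, c, d)) = tet_code (a, c, b, d)"
    and "tet_sys 2 (tet_code (a, b, c, d)) = tet_code (a, b, d, c)"
  using assms by (simp_all add: tet_sys_def tet_decode_code tet_perms_def)

lemma tet_flags_less_256: "x \<in> tet_flags \<Longrightarrow> x < 256"
  unfolding tet_flags_def tet_perms_def tet_code_def by auto

lemma tet_sys_ge_3: "3 \<le> k \<Longrightarrow> tet_sys k x = x + 256"
  by (simp add: tet_sys_def split: prod.split)

lemma tet_perms_cover: "(a, b, c, d) \<in> tet_perms \<Longrightarrow> x < 4 \<Longrightarrow> x \<in> {a, b, c, d}"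
  by (simp only: tet_perms_set lessThan_iff)

lemma tet_code_in_flags: "p \<in> tet_perms \<Longrightarrow> tet_code p \<in> tet_flags"
  unfolding tet_flags_def by blast

lemma tet_flagsE:
  assumes "x \<in> tet_flags"
  obtains a b c d where "x = tet_code (a, b, c, d)" "(a, b, c, d) \<in> tet_perms"
  using assms unfolding tet_flags_def by auto

lemma tet_reach_swap:
  assumes "(x, tet_code (a, b, c, d)) \<in> (step tet_flags tet_sys I)\<^sup>*" "(a, b, c, d) \<in> tet_perms"
  shows "0 \<in> I \<Longrightarrow> (x, tet_code (b, a, c, d)) \<in> (step tet_flags tet_sys I)\<^sup>*"
    and "1 \<in> I \<Longrightarrow> (x, tet_code (a, c, b, d)) \<in> (step tet_flags tet_sys I)\<^sup>*"
    and "2 \<in> I \<Longrightarrow> (x, tet_code (a, b, d, c)) \<in> (step tet_flags tet_sys I)\<^sup>*"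
  using rtrancl_step_snoc[OF assms(1) tet_code_in_flags[OF assms(2)]] tet_sys_code[OF assms(2)]
  by metis+

definition tet_vertex :: "nat \<Rightarrow> nat set" where
  "tet_vertex a = {tet_code (a, b, c, d) | b c d. (a, b, c, d) \<in> tet_perms}"

definition tet_edge :: "nat \<Rightarrow> nat \<Rightarrow> nat set" where
  "tet_edge a b = {tet_code (x, y, c, d) | x y c d. (x, y, c, d) \<in> tet_perms \<and> {x, y} = {a, b}}"

definition tet_face :: "nat \<Rightarrow> nat set" where
  "tet_face d = {tet_code (a, b, c, d) | a b c. (a, b, c, d) \<in> tet_perms}"

lemma tet_code_in_vertex_iff:
  "(x, y, z, w) \<in> tet_perms \<Longrightarrow> tet_code (x, y, z, w) \<in> tet_vertex a \<longleftrightarrow> x = a"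
  unfolding tet_vertex_def using inj_on_tet_code by (auto dest: inj_onD)

lemma tet_code_in_edge_iff:
  "(x, y, z, w) \<in> tet_perms \<Longrightarrow> tet_code (x, y, z, w) \<in> tet_edge a b \<longleftrightarrow> {x, y} = {a, b}"
  unfolding tet_edge_def using inj_on_tet_code by (auto dest: inj_onD)

lemma tet_code_in_face_iff:
  "(x, y, z, w) \<in> tet_perms \<Longrightarrow> tet_code (x, y, z, w) \<in> tet_face d \<longleftrightarrow> w = d"
  unfolding tet_face_def using inj_on_tet_code by (auto dest: inj_onD)

lemma tet_vertex_reach:
  assumes p: "(a, b, c, d) \<in> tet_perms" and q: "(a, b', c', d') \<in> tet_perms"
  shows "(tet_code (a, b, c, d), tet_code (a, b', c', d')) \<in> (step tet_flags tet_sys {1, 2})\<^sup>*"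
proof -
  let ?R = "(step tet_flags tet_sys {1, 2})\<^sup>*" and ?x = "tet_code (a, b, c, d)"
  have r0: "(?x, tet_code (a, b, c, d)) \<in> ?R" by simp
  have r1: "(?x, tet_code (a, c, b, d)) \<in> ?R" by (rule tet_reach_swap(2)[OF r0 p]) simp
  have r2: "(?x, tet_code (a, b, d, c)) \<in> ?R" by (rule tet_reach_swap(3)[OF r0 p]) simp
  have r3: "(?x, tet_code (a, c, d, b)) \<in> ?R"
    by (rule tet_reach_swap(3)[OF r1]) (use tet_perms_swap[OF p] in simp_all)
  have r4: "(?x, tet_code (a, d, b, c)) \<in> ?R"
    by (rule tet_reach_swap(2)[OF r2]) (use tet_perms_swap[OF p] in simp_all)
  have r5: "(?x, tet_code (a, d, c, b)) \<in> ?R"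
    by (rule tet_reach_swap(2)[OF r3])
      (use tet_perms_swap(3)[OF tet_perms_swap(2)[OF p]] in simp_all)
  have "b' \<in> {b, c, d}" "c' \<in> {b, c, d}" "d' \<in> {b, c, d}"
    using tet_perms_cover[OF p, of b'] tet_perms_cover[OF p, of c'] tet_perms_cover[OF p, of d'] q
    unfolding tet_perms_def by auto
  then have "(b', c', d') \<in> {(b, c, d), (c, b, d), (b, d, c), (c, d, b), (d, b, c), (d, c, b)}"
    using q unfolding tet_perms_def by auto
  then show ?thesis using r0 r1 r2 r3 r4 r5 by auto
qed

lemma tet_face_reach:
  assumes p: "(a, b, c, d) \<in> tet_perms" and q: "(a', b', c', d) \<in> tet_perms"
  shows "(tet_code (a, b, c, d), tet_code (a', b', c', d)) \<in> (step tet_flags tet_sys {0, 1})\<^sup>*"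
proof -
  let ?R = "(step tet_flags tet_sys {0, 1})\<^sup>*" and ?x = "tet_code (a, b, c, d)"
  have r0: "(?x, tet_code (a, b, c, d)) \<in> ?R" by simp
  have r1: "(?x, tet_code (b, a, c, d)) \<in> ?R" by (rule tet_reach_swap(1)[OF r0 p]) simp
  have r2: "(?x, tet_code (a, c, b, d)) \<in> ?R" by (rule tet_reach_swap(2)[OF r0 p]) simp
  have r3: "(?x, tet_code (b, c, a, d)) \<in> ?R"
    by (rule tet_reach_swap(2)[OF r1]) (use tet_perms_swap[OF p] in simp_all)
  have r4: "(?x, tet_code (c, a, b, d)) \<in> ?R"
    by (rule tet_reach_swap(1)[OF r2]) (use tet_perms_swap[OF p] in simp_all)
  have r5: "(?x, tet_code (c, b, a, d)) \<in> ?R"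
    by (rule tet_reach_swap(1)[OF r3])
      (use tet_perms_swap(2)[OF tet_perms_swap(1)[OF p]] in simp_all)
  have "a' \<in> {a, b, c}" "b' \<in> {a, b, c}" "c' \<in> {a, b, c}"
    using tet_perms_cover[OF p, of a'] tet_perms_cover[OF p, of b'] tet_perms_cover[OF p, of c'] q
    unfolding tet_perms_def by auto
  then have "(a', b', c') \<in> {(a, b, c), (b, a, c), (a, c, b), (b, c, a), (c, a, b), (c, b, a)}"
    using q unfolding tet_perms_def by auto
  then show ?thesis using r0 r1 r2 r3 r4 r5 by auto
qed

lemma tet_edge_reach:
  assumes p: "(a, b, c, d) \<in> tet_perms" and q: "(x, y, z, w) \<in> tet_perms" and xy: "{x, y} = {a, b}"
  shows "(tet_code (a, b, c, d), tet_code (x, y, z, w)) \<in> (step tet_flags tet_sys {0, 2})\<^sup>*"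
proof -
  let ?R = "(step tet_flags tet_sys {0, 2})\<^sup>*" and ?x = "tet_code (a, b, c, d)"
  have r0: "(?x, tet_code (a, b, c, d)) \<in> ?R" by simp
  have r1: "(?x, tet_code (b, a, c, d)) \<in> ?R" by (rule tet_reach_swap(1)[OF r0 p]) simp
  have r2: "(?x, tet_code (a, b, d, c)) \<in> ?R" by (rule tet_reach_swap(3)[OF r0 p]) simp
  have r3: "(?x, tet_code (b, a, d, c)) \<in> ?R"
    by (rule tet_reach_swap(3)[OF r1]) (use tet_perms_swap[OF p] in simp_all)
  have "z \<in> {c, d}" "w \<in> {c, d}"
    using tet_perms_cover[OF p, of z] tet_perms_cover[OF p, of w] q xy
    unfolding tet_perms_def by (auto simp: doubleton_eq_iff)
  then have "(x, y, z, w) \<in> {(a, b, c, d), (b, a, c, d), (a, b, d, c), (b, a, d, c)}"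
    using q xy unfolding tet_perms_def by (auto simp: doubleton_eq_iff)
  then show ?thesis using r0 r1 r2 r3 by auto
qed

lemma orb_tet_vertex:
  assumes p: "(a, b, c, d) \<in> tet_perms"
  shows "orb tet_flags tet_sys {1, 2} (tet_code (a, b, c, d)) = tet_vertex a"
proof (rule orb_eqI)
  show "tet_code (a, b, c, d) \<in> tet_vertex a" using p by (simp add: tet_code_in_vertex_iff)
  show "tet_sys i q \<in> tet_vertex a" if q_in: "q \<in> tet_vertex a" and i_in: "i \<in> {1, 2}" for q i
  proof -
    obtain x y z where q: "q = tet_code (a, x, y, z)" "(a, x, y, z) \<in> tet_perms"
      using q_in unfolding tet_vertex_def by blast
    with i_in show ?thesis
      using tet_perms_swap[OF q(2)] by (auto simp: tet_sys_code tet_code_in_vertex_iff)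
  qed
  show "(tet_code (a, b, c, d), q) \<in> (step tet_flags tet_sys {1, 2})\<^sup>*" if "q \<in> tet_vertex a" for q
    using that p tet_vertex_reach unfolding tet_vertex_def by blast
qed

lemma orb_tet_face:
  assumes p: "(a, b, c, d) \<in> tet_perms"
  shows "orb tet_flags tet_sys {0, 1} (tet_code (a, b, c, d)) = tet_face d"
proof (rule orb_eqI)
  show "tet_code (a, b, c, d) \<in> tet_face d" using p by (simp add: tet_code_in_face_iff)
  show "tet_sys i q \<in> tet_face d" if q_in: "q \<in> tet_face d" and i_in: "i \<in> {0, 1}" for q i
  proof -
    obtain x y z where q: "q = tet_code (x, y, z, d)" "(x, y, z, d) \<in> tet_perms"
      using q_in unfolding tet_face_def by blast
    with i_in show ?thesis
      using tet_perms_swap[OF q(2)] by (auto simp: tet_sys_code tet_code_in_face_iff)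
  qed
  show "(tet_code (a, b, c, d), q) \<in> (step tet_flags tet_sys {0, 1})\<^sup>*" if "q \<in> tet_face d" for q
    using that p tet_face_reach unfolding tet_face_def by blast
qed

lemma orb_tet_edge:
  assumes p: "(a, b, c, d) \<in> tet_perms"
  shows "orb tet_flags tet_sys {0, 2} (tet_code (a, b, c, d)) = tet_edge a b"
proof (rule orb_eqI)
  show "tet_code (a, b, c, d) \<in> tet_edge a b" using p by (simp add: tet_code_in_edge_iff)
  show "tet_sys i q \<in> tet_edge a b" if q_in: "q \<in> tet_edge a b" and i_in: "i \<in> {0, 2}" for q i
  proof -
    obtain x y z w where q: "q = tet_code (x, y, z, w)" "(x, y, z, w) \<in> tet_perms" "{x, y} = {a, b}"
      using q_in unfolding tet_edge_def by blast
    then have "{y, x} = {a, b}" by blast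
    with q i_in show ?thesis
      using tet_perms_swap[OF q(2)] by (auto simp: tet_sys_code tet_code_in_edge_iff)
  qed
  show "(tet_code (a, b, c, d), q) \<in> (step tet_flags tet_sys {0, 2})\<^sup>*" if "q \<in> tet_edge a b" for q
    using that p tet_edge_reach unfolding tet_edge_def by blast
qed

lemma tet_perms_exists_first:
  assumes "a < 4"
  obtains b c d where "(a, b, c, d) \<in> tet_perms"
proof -
  let ?b = "if a = 0 then 1 else 0 :: nat"
  have "?b < 4" "a \<noteq> ?b" by simp_all
  then obtain c d where "(a, ?b, c, d) \<in> tet_perms" by (rule tet_perms_extend[OF assms])
  then show thesis by (rule that)
qed

lemma tet_perms_exists_last:
  assumes "d < 4"
  obtains a b c where "(a, b, c, d) \<in> tet_perms"
proof -
  obtain b c e where "(d, b, c, e) \<in> tet_perms" using tet_perms_exists_first assms by blast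
  then have "(b, c, e, d) \<in> tet_perms" unfolding tet_perms_def by auto
  then show thesis ..
qed

lemma vertices_tet: "vertices tet_flags tet_sys = tet_vertex ` {..<4}"
proof
  show "vertices tet_flags tet_sys \<subseteq> tet_vertex ` {..<4}"
    by (auto simp: vertices_def tet_perms_def orb_tet_vertex elim!: tet_flagsE)
  show "tet_vertex ` {..<4} \<subseteq> vertices tet_flags tet_sys"
  proof
    fix v assume "v \<in> tet_vertex ` {..<4}"
    then obtain a where a: "a < 4" "v = tet_vertex a" by auto
    then obtain b c d where p: "(a, b, c, d) \<in> tet_perms" using tet_perms_exists_first by blast
    then show "v \<in> vertices tet_flags tet_sys"
      unfolding vertices_def a(2) orb_tet_vertex[OF p, symmetric] using tet_code_in_flags by blast
  qed
qed

lemma faces_tet: "faces tet_flags tet_sys = tet_face ` {..<4}"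
proof
  show "faces tet_flags tet_sys \<subseteq> tet_face ` {..<4}"
    by (auto simp: faces_def tet_perms_def orb_tet_face elim!: tet_flagsE)
  show "tet_face ` {..<4} \<subseteq> faces tet_flags tet_sys"
  proof
    fix f assume "f \<in> tet_face ` {..<4}"
    then obtain d where d: "d < 4" "f = tet_face d" by auto
    then obtain a b c where p: "(a, b, c, d) \<in> tet_perms" using tet_perms_exists_last by blast
    then show "f \<in> faces tet_flags tet_sys"
      unfolding faces_def d(2) orb_tet_face[OF p, symmetric] using tet_code_in_flags by blast
  qed
qed

lemma edges_tet: "edges tet_flags tet_sys = {tet_edge a b | a b. a < 4 \<and> b < 4 \<and> a \<noteq> b}"
proof
  show "edges tet_flags tet_sys \<subseteq> {tet_edge a b | a b. a < 4 \<and> b < 4 \<and> a \<noteq> b}"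
    by (auto simp: edges_def tet_perms_def orb_tet_edge elim!: tet_flagsE) blast
  show "{tet_edge a b | a b. a < 4 \<and> b < 4 \<and> a \<noteq> b} \<subseteq> edges tet_flags tet_sys"
  proof
    fix e assume "e \<in> {tet_edge a b | a b. a < 4 \<and> b < 4 \<and> a \<noteq> b}"
    then obtain a b where ab: "a < 4" "b < 4" "a \<noteq> b" "e = tet_edge a b" by auto
    then obtain c d where p: "(a, b, c, d) \<in> tet_perms" using tet_perms_extend by blast
    then show "e \<in> edges tet_flags tet_sys"
      unfolding edges_def ab(4) orb_tet_edge[OF p, symmetric] using tet_code_in_flags by blast
  qed
qed

lemma tet_vertex_inj: "a < 4 \<Longrightarrow> tet_vertex a = tet_vertex b \<Longrightarrow> a = b"
  by (metis tet_perms_exists_first tet_code_in_vertex_iff)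

lemma tet_vertex_meets_edge_iff:
  assumes "a < 4" "b < 4" "a \<noteq> b"
  shows "tet_vertex v \<inter> tet_edge a b \<noteq> {} \<longleftrightarrow> v = a \<or> v = b"
proof
  assume "tet_vertex v \<inter> tet_edge a b \<noteq> {}"
  then obtain x y z w where "(x, y, z, w) \<in> tet_perms" "{x, y} = {a, b}"
    "tet_code (x, y, z, w) \<in> tet_vertex v"
    unfolding tet_edge_def by blast
  then show "v = a \<or> v = b" by (auto simp: tet_code_in_vertex_iff doubleton_eq_iff)
next
  obtain c d where p: "(a, b, c, d) \<in> tet_perms" using tet_perms_extend assms by blast
  assume "v = a \<or> v = b"
  moreover have "tet_code (a, b, c, d) \<in> tet_vertex a \<inter> tet_edge a b"
    "tet_code (b, a, c, d) \<in> tet_vertex b \<inter> tet_edge a b"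
    using p tet_perms_swap(1)[OF p]
    by (auto simp: tet_code_in_vertex_iff tet_code_in_edge_iff insert_commute)
  ultimately show "tet_vertex v \<inter> tet_edge a b \<noteq> {}" by blast
qed

lemma tet_vertex_meets_face_iff:
  assumes "a < 4" "d < 4"
  shows "tet_vertex a \<inter> tet_face d \<noteq> {} \<longleftrightarrow> a \<noteq> d"
proof
  assume "tet_vertex a \<inter> tet_face d \<noteq> {}"
  then obtain x y z where "(x, y, z, d) \<in> tet_perms" "tet_code (x, y, z, d) \<in> tet_vertex a"
    unfolding tet_face_def by blast
  then show "a \<noteq> d" by (auto simp: tet_code_in_vertex_iff tet_perms_def)
next
  assume "a \<noteq> d"
  then obtain y z where "(a, d, y, z) \<in> tet_perms" using tet_perms_extend assms by blast
  then have "(a, y, z, d) \<in> tet_perms" unfolding tet_perms_def by auto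
  then have "tet_code (a, y, z, d) \<in> tet_vertex a \<inter> tet_face d"
    by (simp add: tet_code_in_vertex_iff tet_code_in_face_iff)
  then show "tet_vertex a \<inter> tet_face d \<noteq> {}" by blast
qed

lemma tet_edge_meets_face_iff:
  assumes "a < 4" "b < 4" "a \<noteq> b" "d < 4"
  shows "tet_edge a b \<inter> tet_face d \<noteq> {} \<longleftrightarrow> d \<noteq> a \<and> d \<noteq> b"
proof
  assume "tet_edge a b \<inter> tet_face d \<noteq> {}"
  then obtain x y z where "(x, y, z, d) \<in> tet_perms" "tet_code (x, y, z, d) \<in> tet_edge a b"
    unfolding tet_face_def by blast
  then show "d \<noteq> a \<and> d \<noteq> b" by (auto simp: tet_code_in_edge_iff tet_perms_def doubleton_eq_iff)
next
  assume d: "d \<noteq> a \<and> d \<noteq> b"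
  obtain y z where p: "(a, b, y, z) \<in> tet_perms" using tet_perms_extend assms by blast
  have "d \<in> {y, z}" using tet_perms_cover[OF p assms(4)] d by blast
  then have "tet_code (a, b, y, z) \<in> tet_edge a b \<inter> tet_face d \<or>
      tet_code (a, b, z, y) \<in> tet_edge a b \<inter> tet_face d"
    using p tet_perms_swap(3)[OF p] by (auto simp: tet_code_in_edge_iff tet_code_in_face_iff)
  then show "tet_edge a b \<inter> tet_face d \<noteq> {}" by blast
qed

lemma ends_tet_edge:
  assumes "a < 4" "b < 4" "a \<noteq> b"
  shows "ends tet_flags tet_sys (tet_edge a b) = {tet_vertex a, tet_vertex b}"
proof -
  have "ends tet_flags tet_sys (tet_edge a b) =
      tet_vertex ` {v \<in> {..<4}. tet_vertex v \<inter> tet_edge a b \<noteq> {}}"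
    unfolding ends_def vertices_tet by blast
  also have "{v \<in> {..<4}. tet_vertex v \<inter> tet_edge a b \<noteq> {}} = {a, b}"
    using tet_vertex_meets_edge_iff[OF assms] assms by auto
  finally show ?thesis by simp
qed

lemma tet_connected:
  assumes "x \<in> tet_flags" "y \<in> tet_flags"
  shows "(x, y) \<in> (step tet_flags tet_sys {0, 1, 2})\<^sup>*"
proof -
  obtain a b c d where x: "x = tet_code (a, b, c, d)" "(a, b, c, d) \<in> tet_perms"
    using assms(1) by (rule tet_flagsE)
  obtain a' b' c' d' where y: "y = tet_code (a', b', c', d')" "(a', b', c', d') \<in> tet_perms"
    using assms(2) by (rule tet_flagsE)
  let ?R = "(step tet_flags tet_sys {0, 1, 2})\<^sup>*"
  have "(step tet_flags tet_sys {1, 2})\<^sup>* \<subseteq> ?R" by (rule rtrancl_mono, rule step_mono) auto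
  then have vertex_reach: "(tet_code (v, e, f, g), tet_code (v, e', f', g')) \<in> ?R"
    if "(v, e, f, g) \<in> tet_perms" "(v, e', f', g') \<in> tet_perms" for v e f g e' f' g'
    using tet_vertex_reach[OF that] by blast
  show ?thesis
  proof (cases "a' = a")
    case True
    then show ?thesis using vertex_reach x y by blast
  next
    case False
    then obtain z w where p: "(a, a', z, w) \<in> tet_perms"
      using tet_perms_extend x(2) y(2) unfolding tet_perms_def by blast
    have "(x, tet_code (a, a', z, w)) \<in> ?R"
      using vertex_reach x p by blast
    then have "(x, tet_code (a', a, z, w)) \<in> ?R"
      by (rule tet_reach_swap(1)[OF _ p]) simp
    moreover have "(tet_code (a', a, z, w), y) \<in> ?R"
      using vertex_reach tet_perms_swap(1)[OF p] y by blast
    ultimately show ?thesis by (rule rtrancl_trans)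
  qed
qed

lemma finite_tet_flags: "finite tet_flags"
proof -
  have "tet_perms \<subseteq> {..<4} \<times> {..<4} \<times> {..<4} \<times> {..<4}" unfolding tet_perms_def by auto
  then show ?thesis unfolding tet_flags_def by (rule finite_imageI[OF finite_subset]) simp
qed

lemma tet_sys_involution:
  assumes "i < 3" "x \<in> tet_flags"
  shows "tet_sys i x \<in> tet_flags \<and> tet_sys i (tet_sys i x) = x \<and> tet_sys i x \<noteq> x"
proof -
  obtain a b c d where x: "x = tet_code (a, b, c, d)" "(a, b, c, d) \<in> tet_perms"
    using assms(2) by (rule tet_flagsE)
  note swaps = tet_perms_swap[OF x(2)]
  have "a \<noteq> b" "b \<noteq> c" "c \<noteq> d" using x(2) unfolding tet_perms_def by auto
  moreover have "i = 0 \<or> i = 1 \<or> i = 2" using assms(1) by (rule less_3_cases)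
  ultimately show ?thesis
    using x swaps tet_sys_code[OF x(2)] tet_sys_code[OF swaps(1)] tet_sys_code[OF swaps(2)]
      tet_sys_code[OF swaps(3)] tet_code_in_flags[OF swaps(1)] tet_code_in_flags[OF swaps(2)]
      tet_code_in_flags[OF swaps(3)]
    by (auto simp: tet_code_eq_iff)
qed

lemma tet_sys_0_2_commute:
  assumes "x \<in> tet_flags"
  shows "tet_sys 0 (tet_sys 2 x) = tet_sys 2 (tet_sys 0 x) \<and> tet_sys 0 (tet_sys 2 x) \<noteq> x"
proof -
  obtain a b c d where x: "x = tet_code (a, b, c, d)" "(a, b, c, d) \<in> tet_perms"
    using assms by (rule tet_flagsE)
  note swaps = tet_perms_swap[OF x(2)]
  have "(b, a, d, c) \<in> tet_perms" "a \<noteq> b" using x(2) unfolding tet_perms_def by auto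
  then show ?thesis
    using x tet_sys_code[OF x(2)] tet_sys_code[OF swaps(1)] tet_sys_code[OF swaps(3)]
    by (auto simp: tet_code_eq_iff)
qed

lemma is_map_tet: "is_map tet_flags tet_sys"
proof -
  have "(0, 1, 2, 3) \<in> tet_perms" unfolding tet_perms_def by simp
  then have "tet_flags \<noteq> {}" using tet_code_in_flags by blast
  then show ?thesis unfolding is_map_def
    using finite_tet_flags tet_sys_involution tet_sys_0_2_commute tet_connected by blast
qed

text \<open>The sign of the permutation (a, b, c, d).\<close>
definition tet_sign :: "nat \<Rightarrow> bool" where
  "tet_sign x = (case tet_decode x of (a, b, c, d) \<Rightarrow>
     (a < b) \<noteq> ((a < c) \<noteq> ((a < d) \<noteq> ((b < c) \<noteq> ((b < d) \<noteq> (c < d))))))"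

lemma tet_sign_code:
  "(a, b, c, d) \<in> tet_perms \<Longrightarrow>
    tet_sign (tet_code (a, b, c, d)) =
      ((a < b) \<noteq> ((a < c) \<noteq> ((a < d) \<noteq> ((b < c) \<noteq> ((b < d) \<noteq> (c < d))))))"
  by (simp add: tet_sign_def tet_decode_code_perm)

lemma orientable_tet: "orientable tet_flags tet_sys"
  unfolding orientable_def
proof (intro exI[of _ tet_sign] ballI allI impI)
  fix x i assume "x \<in> tet_flags" "(i::nat) < 3"
  then obtain a b c d where x: "x = tet_code (a, b, c, d)" "(a, b, c, d) \<in> tet_perms"
    by (blast elim: tet_flagsE)
  note swaps = tet_perms_swap[OF x(2)]
  have "(b < a) = (\<not> a < b)" "(c < b) = (\<not> b < c)" "(d < c) = (\<not> c < d)"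
    using x(2) unfolding tet_perms_def by auto
  then have "tet_sign (tet_code (b, a, c, d)) \<noteq> tet_sign x"
    "tet_sign (tet_code (a, c, b, d)) \<noteq> tet_sign x" "tet_sign (tet_code (a, b, d, c)) \<noteq> tet_sign x"
    unfolding x(1) tet_sign_code[OF x(2)] tet_sign_code[OF swaps(1)] tet_sign_code[OF swaps(2)]
      tet_sign_code[OF swaps(3)] by argo+
  then show "tet_sign (tet_sys i x) \<noteq> tet_sign x"
    using less_3_cases[OF \<open>i < 3\<close>] tet_sys_code[OF x(2)] x(1) by auto
qed

lemma simple_graph_tet: "simple_graph tet_flags tet_sys"
  unfolding simple_graph_def
proof (intro conjI ballI impI)
  fix e assume "e \<in> edges tet_flags tet_sys"
  then obtain a b where ab: "a < 4" "b < 4" "a \<noteq> b" "e = tet_edge a b" unfolding edges_tet by blast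
  moreover have "tet_vertex a \<noteq> tet_vertex b" using tet_vertex_inj[OF ab(1)] ab(3) by blast
  ultimately show "card (ends tet_flags tet_sys e) = 2" by (simp add: ends_tet_edge)
next
  fix e e' assume "e \<in> edges tet_flags tet_sys" "e' \<in> edges tet_flags tet_sys"
    and ends_eq: "ends tet_flags tet_sys e = ends tet_flags tet_sys e'"
  then obtain a b a' b' where ab: "a < 4" "b < 4" "a \<noteq> b" "e = tet_edge a b"
    and ab': "a' < 4" "b' < 4" "a' \<noteq> b'" "e' = tet_edge a' b'"
    unfolding edges_tet by blast
  have "{tet_vertex a, tet_vertex b} = {tet_vertex a', tet_vertex b'}"
    using ends_eq by (simp add: ab ab' ends_tet_edge)
  then have "{a, b} = {a', b'}"
    using tet_vertex_inj ab ab' by (auto simp: doubleton_eq_iff)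
  then show "e = e'" unfolding ab(4) ab'(4) tet_edge_def by simp
qed

lemma tet_edge_in_edges: "a < 4 \<Longrightarrow> b < 4 \<Longrightarrow> a \<noteq> b \<Longrightarrow> tet_edge a b \<in> edges tet_flags tet_sys"
  unfolding edges_tet by blast

lemma k_connected_tet: "k_connected 3 tet_flags tet_sys"
  unfolding k_connected_def
proof (intro conjI allI impI)
  have "inj_on tet_vertex {..<4}" using tet_vertex_inj by (meson inj_onI lessThan_iff)
  then show "card (vertices tet_flags tet_sys) > 3" unfolding vertices_tet by (simp add: card_image)
  fix S :: "nat set set"
  show "sub_connected tet_flags tet_sys (vertices tet_flags tet_sys - S)
      {e \<in> edges tet_flags tet_sys. ends tet_flags tet_sys e \<inter> S = {}}"
  proof (rule sub_connectedI)
    fix u w assume u: "u \<in> vertices tet_flags tet_sys - S"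
      and w: "w \<in> vertices tet_flags tet_sys - S" and "u \<noteq> w"
    obtain a b where ab: "a < 4" "b < 4" "u = tet_vertex a" "w = tet_vertex b"
      using u w unfolding vertices_tet by auto
    with \<open>u \<noteq> w\<close> have "a \<noteq> b" by blast
    with ab have "ends tet_flags tet_sys (tet_edge a b) = {u, w}" by (simp add: ends_tet_edge)
    moreover have "tet_edge a b \<in> edges tet_flags tet_sys"
      using tet_edge_in_edges ab \<open>a \<noteq> b\<close> by blast
    ultimately show "\<exists>e\<in>{e \<in> edges tet_flags tet_sys. ends tet_flags tet_sys e \<inter> S = {}}.
        u \<in> ends tet_flags tet_sys e \<and> w \<in> ends tet_flags tet_sys e"
      using u w by auto
  qed
qed

lemma tet_face_intersections_connected:
  assumes "f \<in> faces tet_flags tet_sys" "g \<in> faces tet_flags tet_sys"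
  shows "sub_connected tet_flags tet_sys
      (face_vertices tet_flags tet_sys f \<inter> face_vertices tet_flags tet_sys g)
      (face_edges tet_flags tet_sys f \<inter> face_edges tet_flags tet_sys g)"
proof (rule sub_connectedI)
  obtain d d' where d: "d < 4" "f = tet_face d" and d': "d' < 4" "g = tet_face d'"
    using assms unfolding faces_tet by blast
  fix u w assume u: "u \<in> face_vertices tet_flags tet_sys f \<inter> face_vertices tet_flags tet_sys g"
    and w: "w \<in> face_vertices tet_flags tet_sys f \<inter> face_vertices tet_flags tet_sys g" and "u \<noteq> w"
  obtain a b where ab: "a < 4" "b < 4" "u = tet_vertex a" "w = tet_vertex b"
    using u w unfolding face_vertices_def vertices_tet by auto
  with \<open>u \<noteq> w\<close> have "a \<noteq> b" by blast
  have "tet_vertex a \<inter> tet_face d \<noteq> {}" "tet_vertex a \<inter> tet_face d' \<noteq> {}"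
    "tet_vertex b \<inter> tet_face d \<noteq> {}" "tet_vertex b \<inter> tet_face d' \<noteq> {}"
    using u w unfolding ab(3,4) d(2) d'(2) face_vertices_def by auto
  then have "a \<noteq> d" "a \<noteq> d'" "b \<noteq> d" "b \<noteq> d'"
    using tet_vertex_meets_face_iff ab(1,2) d(1) d'(1) by simp_all
  then have "tet_edge a b \<inter> f \<noteq> {}" "tet_edge a b \<inter> g \<noteq> {}"
    unfolding d(2) d'(2) using tet_edge_meets_face_iff[OF ab(1,2) \<open>a \<noteq> b\<close>] d(1) d'(1) by simp_all
  then have "tet_edge a b \<in> face_edges tet_flags tet_sys f \<inter> face_edges tet_flags tet_sys g"
    unfolding face_edges_def using tet_edge_in_edges[OF ab(1,2) \<open>a \<noteq> b\<close>] by blast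
  moreover have "ends tet_flags tet_sys (tet_edge a b) = {u, w}"
    using ab \<open>a \<noteq> b\<close> by (simp add: ends_tet_edge)
  ultimately show "\<exists>e\<in>face_edges tet_flags tet_sys f \<inter> face_edges tet_flags tet_sys g.
      u \<in> ends tet_flags tet_sys e \<and> w \<in> ends tet_flags tet_sys e"
    by blast
qed

lemma polyhedral_tet: "polyhedral tet_flags tet_sys"
  unfolding polyhedral_def
  using is_map_tet orientable_tet simple_graph_tet k_connected_tet tet_face_intersections_connected by blast

lemma tet_disconnected_without:
  assumes "k < 3"
  shows "\<exists>x\<in>tet_flags. \<exists>y\<in>tet_flags. (x, y) \<notin> (step tet_flags tet_sys ({0, 1, 2} - {k}))\<^sup>*"
proof -
  have p: "(0, 1, 2, 3) \<in> tet_perms" "(1, 0, 2, 3) \<in> tet_perms" "(0, 2, 1, 3) \<in> tet_perms"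
    "(0, 1, 3, 2) \<in> tet_perms"
    unfolding tet_perms_def by simp_all
  let ?x = "tet_code (0, 1, 2, 3)"
  have "\<exists>y\<in>tet_flags. y \<notin> orb tet_flags tet_sys ({0, 1, 2} - {k}) ?x"
  proof -
    consider "k = 0" | "k = 1" | "k = 2" using less_3_cases[OF assms] by blast
    then show ?thesis
    proof cases
      case 1
      then have "{0, 1, 2} - {k} = {1, 2}" by auto
      moreover have "tet_code (1, 0, 2, 3) \<notin> tet_vertex 0"
        by (simp add: tet_code_in_vertex_iff[OF p(2)])
      ultimately show ?thesis using orb_tet_vertex[OF p(1)] tet_code_in_flags[OF p(2)] by auto
    next
      case 2
      then have "{0, 1, 2} - {k} = {0, 2}" by auto
      moreover have "{0, 2} \<noteq> {0, 1::nat}" by (auto simp: doubleton_eq_iff)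
      then have "tet_code (0, 2, 1, 3) \<notin> tet_edge 0 1" by (simp add: tet_code_in_edge_iff[OF p(3)])
      ultimately show ?thesis using orb_tet_edge[OF p(1)] tet_code_in_flags[OF p(3)] by auto
    next
      case 3
      then have "{0, 1, 2} - {k} = {0, 1}" by auto
      moreover have "tet_code (0, 1, 3, 2) \<notin> tet_face 3"
        by (simp add: tet_code_in_face_iff[OF p(4)])
      ultimately show ?thesis using orb_tet_face[OF p(1)] tet_code_in_flags[OF p(4)] by auto
    qed
  qed
  then show ?thesis unfolding orb_def using tet_code_in_flags[OF p(1)] by blast
qed

section \<open>Applying a c3-lsp-operation\<close>

text \<open>Crossing the side of y opposite its colour-i vertex leads into the face op_nbr i y of O;
  if this is the outer face, it leaves the chamber of P through its side opposite the vertex of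
  colour op_boundary_label i y.\<close>
definition op_nbr :: "'o set \<Rightarrow> 'o fsys \<Rightarrow> ('o set \<Rightarrow> nat) \<Rightarrow> nat \<Rightarrow> 'o set \<Rightarrow> 'o set" where
  "op_nbr G t c i y = orb G t {0, 1} (t 2 (opp_flag G t c y i))"

definition op_boundary_label :: "'o set \<Rightarrow> 'o fsys \<Rightarrow> ('o set \<Rightarrow> nat) \<Rightarrow> 'o set \<Rightarrow> 'o set \<Rightarrow> 'o set \<Rightarrow>
    'o set \<Rightarrow> nat \<Rightarrow> 'o set \<Rightarrow> nat" where
  "op_boundary_label G t c outer v0 v1 v2 i y =
     path_label G t outer v0 v1 v2 (t 2 (opp_flag G t c y i))"

definition op_inner_adj ::
    "'o set \<Rightarrow> 'o fsys \<Rightarrow> ('o set \<Rightarrow> nat) \<Rightarrow> 'o set \<Rightarrow> ('o set \<times> 'o set) set" where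
  "op_inner_adj G t c outer =
     {(y, op_nbr G t c i y) | y i. y \<in> op_chambers G t outer \<and> i < 3 \<and> op_nbr G t c i y \<noteq> outer}"

definition op_boundary_labels :: "'o set \<Rightarrow> 'o fsys \<Rightarrow> ('o set \<Rightarrow> nat) \<Rightarrow> 'o set \<Rightarrow> 'o set \<Rightarrow> 'o set \<Rightarrow>
    'o set \<Rightarrow> nat set" where
  "op_boundary_labels G t c outer v0 v1 v2 =
     {op_boundary_label G t c outer v0 v1 v2 i y | i y.
        y \<in> op_chambers G t outer \<and> i < 3 \<and> op_nbr G t c i y = outer}"

lemma op_sys_Pair:
  "op_sys s G t c outer v0 v1 v2 i (f, y) =
    (if op_nbr G t c i y \<noteq> outer then (f, op_nbr G t c i y)
     else (s (op_boundary_label G t c outer v0 v1 v2 i y) f, y))"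
  unfolding op_sys_def op_nbr_def op_boundary_label_def Let_def by simp

lemma snd_op_sys:
  "snd (op_sys s G t c outer v0 v1 v2 i x) =
    (if op_nbr G t c i (snd x) \<noteq> outer then op_nbr G t c i (snd x) else snd x)"
  by (cases x) (simp add: op_sys_Pair)

lemma op_sys_path_fst:
  assumes "(p, q) \<in> (step (F \<times> op_chambers G t outer) (op_sys s G t c outer v0 v1 v2) {0, 1, 2})\<^sup>*"
  shows "(fst p, fst q) \<in> (step F s (op_boundary_labels G t c outer v0 v1 v2))\<^sup>*"
  using assms
proof (induction rule: rtrancl_induct)
  case (step q r)
  then obtain i f y where i: "i \<in> {0, 1, 2}" and q: "q = (f, y)" "f \<in> F" "y \<in> op_chambers G t outer"
    and r: "r = op_sys s G t c outer v0 v1 v2 i (f, y)"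
    by (auto simp: step_iff)
  show ?case
  proof (cases "op_nbr G t c i y = outer")
    case True
    moreover have "i < 3" using i by auto
    ultimately have
      "op_boundary_label G t c outer v0 v1 v2 i y \<in> op_boundary_labels G t c outer v0 v1 v2"
      using q(3) unfolding op_boundary_labels_def by blast
    with True q r have "(fst q, fst r) \<in> step F s (op_boundary_labels G t c outer v0 v1 v2)"
      by (auto simp: op_sys_Pair step_iff)
    with step.IH show ?thesis by (rule rtrancl_into_rtrancl)
  next
    case False
    with q r step.IH show ?thesis by (simp add: op_sys_Pair)
  qed
qed simp

lemma op_sys_path_snd:
  assumes "(p, q) \<in> (step (F \<times> op_chambers G t outer) (op_sys s G t c outer v0 v1 v2) {0, 1, 2})\<^sup>*"
  shows "(snd p, snd q) \<in> (op_inner_adj G t c outer)\<^sup>*"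
  using assms
proof (induction rule: rtrancl_induct)
  case (step q r)
  then obtain i f y where i: "i \<in> {0, 1, 2}" and q: "q = (f, y)" "f \<in> F" "y \<in> op_chambers G t outer"
    and r: "r = op_sys s G t c outer v0 v1 v2 i (f, y)"
    by (auto simp: step_iff)
  show ?case
  proof (cases "op_nbr G t c i y = outer")
    case False
    moreover have "i < 3" using i by auto
    ultimately have "(y, op_nbr G t c i y) \<in> op_inner_adj G t c outer"
      using q(3) unfolding op_inner_adj_def by blast
    with False q r have "(snd q, snd r) \<in> op_inner_adj G t c outer"
      by (simp add: op_sys_Pair)
    with step.IH show ?thesis by (rule rtrancl_into_rtrancl)
  next
    case True
    with q r step.IH show ?thesis by (simp add: op_sys_Pair)
  qed
qed simp

lemma op_inner_adj_connected:
  assumes "is_map (F \<times> op_chambers G t outer) (op_sys s G t c outer v0 v1 v2)"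
    and "y \<in> op_chambers G t outer" "y' \<in> op_chambers G t outer"
  shows "(y, y') \<in> (op_inner_adj G t c outer)\<^sup>*"
proof -
  obtain f where "f \<in> F" using assms(1,2) unfolding is_map_def by blast
  with assms have "((f, y), (f, y')) \<in>
      (step (F \<times> op_chambers G t outer) (op_sys s G t c outer v0 v1 v2) {0, 1, 2})\<^sup>*"
    unfolding is_map_def by blast
  from op_sys_path_snd[OF this] show ?thesis by simp
qed

definition lift_fst :: "('a \<times> 'b) set \<Rightarrow> ('a \<Rightarrow> 'a) \<Rightarrow> 'a \<times> 'b \<Rightarrow> 'a \<times> 'b" where
  "lift_fst X \<psi> x = (if x \<in> X then (\<psi> (fst x), snd x) else x)"

definition preserves_classes :: "('a \<times> 'b) set \<Rightarrow> ('a \<times> 'b \<Rightarrow> 'a \<times> 'b) \<Rightarrow> bool" where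
  "preserves_classes X \<phi> \<longleftrightarrow> (\<forall>x\<in>X. snd (\<phi> x) = snd x)"

locale c3_lsp =
  fixes G :: "'o set" and t :: "'o fsys" and c :: "'o set \<Rightarrow> nat" and outer v0 v1 v2 :: "'o set"
  assumes c3: "c3_lsp_operation G t c outer v0 v1 v2"
begin

abbreviation "Y \<equiv> op_chambers G t outer"

lemma map_tet_op: "is_map (tet_flags \<times> Y) (op_sys tet_sys G t c outer v0 v1 v2)"
proof -
  have "\<forall>(F :: nat set) s. polyhedral F s \<longrightarrow> polyhedral (F \<times> Y) (op_sys s G t c outer v0 v1 v2)"
    using c3 unfolding c3_lsp_operation_def by (rule conjunct2)
  with polyhedral_tet show ?thesis unfolding polyhedral_def by blast
qed

lemma finite_Y: "finite Y"
  using c3 unfolding c3_lsp_operation_def lsp_operation_def plane_map_def is_map_def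
    op_chambers_def faces_def by simp

lemma Y_nonempty: "Y \<noteq> {}"
  using map_tet_op unfolding is_map_def by blast

lemma op_nbr_in_Y:
  assumes "i < 3" "y \<in> Y" "op_nbr G t c i y \<noteq> outer"
  shows "op_nbr G t c i y \<in> Y"
proof -
  obtain x where "x \<in> tet_flags" using is_map_tet unfolding is_map_def by blast
  with assms map_tet_op have "op_sys tet_sys G t c outer v0 v1 v2 i (x, y) \<in> tet_flags \<times> Y"
    unfolding is_map_def by blast
  with assms show ?thesis by (simp add: op_sys_Pair)
qed

lemma Y_connected: "y \<in> Y \<Longrightarrow> y' \<in> Y \<Longrightarrow> (y, y') \<in> (op_inner_adj G t c outer)\<^sup>*"
  by (rule op_inner_adj_connected[OF map_tet_op])

text \<open>Apply O to the tetrahedron: a label k \<ge> 3 would move flags out of the carrier, and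
  a missing label k would make the tetrahedron connected without s k.\<close>
lemma op_boundary_labels_eq: "op_boundary_labels G t c outer v0 v1 v2 = {0, 1, 2}"
proof -
  let ?X = "tet_flags \<times> Y" and ?\<sigma> = "op_sys tet_sys G t c outer v0 v1 v2"
  obtain x0 where x0: "x0 \<in> tet_flags" using is_map_tet unfolding is_map_def by blast
  have labels_less_3: "op_boundary_labels G t c outer v0 v1 v2 \<subseteq> {0, 1, 2}"
  proof
    fix k assume "k \<in> op_boundary_labels G t c outer v0 v1 v2"
    then obtain i y where iy: "i < 3" "y \<in> op_chambers G t outer" "op_nbr G t c i y = outer"
      "op_boundary_label G t c outer v0 v1 v2 i y = k"
      unfolding op_boundary_labels_def by blast
    have "?\<sigma> i (x0, y) \<in> ?X" using map_tet_op iy x0 unfolding is_map_def by blast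
    then have "tet_sys k x0 \<in> tet_flags" using iy by (simp add: op_sys_Pair)
    then have "\<not> 3 \<le> k" using tet_sys_ge_3 tet_flags_less_256 by fastforce
    then show "k \<in> {0, 1, 2}" by (auto simp: One_nat_def)
  qed
  moreover have "k \<in> op_boundary_labels G t c outer v0 v1 v2" if "k < 3" for k
  proof (rule ccontr)
    assume "k \<notin> op_boundary_labels G t c outer v0 v1 v2"
    with labels_less_3 have sub: "step tet_flags tet_sys (op_boundary_labels G t c outer v0 v1 v2)
        \<subseteq> step tet_flags tet_sys ({0, 1, 2} - {k})"
      by (intro step_mono) blast
    obtain y where y: "y \<in> Y" using Y_nonempty by blast
    have "(x, x') \<in> (step tet_flags tet_sys ({0, 1, 2} - {k}))\<^sup>*"
      if "x \<in> tet_flags" "x' \<in> tet_flags" for x x'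
    proof -
      have "((x, y), (x', y)) \<in> (step ?X ?\<sigma> {0, 1, 2})\<^sup>*"
        using map_tet_op that y unfolding is_map_def by blast
      from op_sys_path_fst[OF this] show ?thesis using rtrancl_mono[OF sub] by auto
    qed
    with tet_disconnected_without[OF that] show False by blast
  qed
  ultimately show ?thesis by (auto simp: One_nat_def)
qed

lemma op_boundary_label_less_3:
  assumes "i < 3" "y \<in> Y" "op_nbr G t c i y = outer"
  shows "op_boundary_label G t c outer v0 v1 v2 i y < 3"
proof -
  have "op_boundary_label G t c outer v0 v1 v2 i y \<in> op_boundary_labels G t c outer v0 v1 v2"
    using assms unfolding op_boundary_labels_def by blast
  then show ?thesis unfolding op_boundary_labels_eq by auto
qed

lemma op_boundary_label_exists:
  assumes "k < 3"
  obtains i y where "i < 3" "y \<in> Y" "op_nbr G t c i y = outer"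
    "op_boundary_label G t c outer v0 v1 v2 i y = k"
proof -
  have "k \<in> op_boundary_labels G t c outer v0 v1 v2"
    unfolding op_boundary_labels_eq using assms by (auto simp: One_nat_def)
  then show thesis using that unfolding op_boundary_labels_def by blast
qed

end

locale lsp_applied = c3_lsp +
  fixes F :: "'f set" and s :: "'f fsys"
  assumes polyhedral: "polyhedral F s"
begin

abbreviation "X \<equiv> F \<times> Y"
abbreviation "\<sigma> \<equiv> op_sys s G t c outer v0 v1 v2"

lemma map_F: "is_map F s"
  using polyhedral unfolding polyhedral_def by blast

lemma finite_X: "finite X"
  using map_F finite_Y unfolding is_map_def by simp

lemma X_nonempty: "X \<noteq> {}"
  using map_F Y_nonempty unfolding is_map_def by simp

lemma op_sys_in_X:
  assumes "i < 3" "x \<in> X"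
  shows "\<sigma> i x \<in> X"
proof -
  obtain f y where x: "x = (f, y)" "f \<in> F" "y \<in> Y" using assms(2) by blast
  show ?thesis
  proof (cases "op_nbr G t c i y = outer")
    case True
    then show ?thesis
      using map_F op_boundary_label_less_3[OF assms(1) x(3) True] x unfolding is_map_def
      by (simp add: op_sys_Pair)
  next
    case False
    then show ?thesis using op_nbr_in_Y[OF assms(1) x(3) False] x by (simp add: op_sys_Pair)
  qed
qed

lemma fibre_connected:
  assumes "f \<in> F" "y \<in> Y" "y' \<in> Y"
  shows "((f, y), (f, y')) \<in> (step X \<sigma> {0, 1, 2})\<^sup>*"
  using Y_connected[OF assms(2,3)]
proof (induction rule: rtrancl_induct)
  case (step y1 y2)
  then obtain i where i: "i < 3" "y1 \<in> Y" "op_nbr G t c i y1 = y2" "y2 \<noteq> outer"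
    unfolding op_inner_adj_def by blast
  with assms(1) have "((f, y1), (f, y2)) \<in> step X \<sigma> {0, 1, 2}"
    unfolding step_iff using less_3_cases[OF i(1)] by (auto simp: op_sys_Pair)
  with step.IH show ?case by (rule rtrancl_into_rtrancl)
qed simp

lemma adjacent_fibres_connected:
  assumes "f \<in> F" "y \<in> Y" "y' \<in> Y" "k < 3"
  shows "((f, y), (s k f, y')) \<in> (step X \<sigma> {0, 1, 2})\<^sup>*"
proof -
  obtain i y0 where iy: "i < 3" "y0 \<in> Y" "op_nbr G t c i y0 = outer"
    "op_boundary_label G t c outer v0 v1 v2 i y0 = k"
    using op_boundary_label_exists[OF assms(4)] .
  with assms(1) have "((f, y0), (s k f, y0)) \<in> step X \<sigma> {0, 1, 2}"
    unfolding step_iff using less_3_cases[OF iy(1)] by (auto simp: op_sys_Pair)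
  moreover have "s k f \<in> F" using map_F assms(1,4) unfolding is_map_def by blast
  ultimately show ?thesis
    using fibre_connected[OF assms(1,2) iy(2)] fibre_connected[of "s k f" y0 y'] iy(2) assms(3)
    by (meson rtrancl_into_rtrancl rtrancl_trans)
qed

lemma X_connected:
  assumes "x \<in> X" "x' \<in> X"
  shows "(x, x') \<in> (step X \<sigma> {0, 1, 2})\<^sup>*"
proof -
  obtain f y f' y' where xx': "x = (f, y)" "x' = (f', y')" "f \<in> F" "y \<in> Y" "f' \<in> F" "y' \<in> Y"
    using assms by blast
  have "(f, f') \<in> (step F s {0, 1, 2})\<^sup>*" using map_F xx' unfolding is_map_def by blast
  then have "((f, y), (f', y')) \<in> (step X \<sigma> {0, 1, 2})\<^sup>*"
  proof (induction rule: rtrancl_induct)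
    case base
    show ?case using fibre_connected xx' by blast
  next
    case (step g h)
    then obtain k where "k \<in> {0, 1, 2}" "g \<in> F" "h = s k g" by (auto simp: step_iff)
    moreover from this have "k < 3" by auto
    ultimately show ?case
      using step.IH adjacent_fibres_connected[of g y' y' k] xx' by (meson rtrancl_trans)
  qed
  with xx' show ?thesis by simp
qed

lemma lift_fst_aut:
  assumes "\<psi> \<in> aut F s"
  shows "lift_fst X \<psi> \<in> aut X \<sigma>"
proof -
  have \<psi>: "bij_betw \<psi> F F" "\<And>i f. i < 3 \<Longrightarrow> f \<in> F \<Longrightarrow> \<psi> (s i f) = s i (\<psi> f)"
    using assms unfolding aut_def by blast+
  have into: "lift_fst X \<psi> ` X \<subseteq> X"
    using bij_betw_apply[OF \<psi>(1)] by (auto simp: lift_fst_def)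
  have "inj_on (lift_fst X \<psi>) X"
    using bij_betw_imp_inj_on[OF \<psi>(1)] by (auto simp: inj_on_def lift_fst_def)
  with into have "bij_betw (lift_fst X \<psi>) X X"
    using endo_inj_surj[OF finite_X into] by (simp add: bij_betw_def)
  moreover have "lift_fst X \<psi> (\<sigma> i x) = \<sigma> i (lift_fst X \<psi> x)" if "i < 3" "x \<in> X" for i x
  proof -
    obtain f y where x: "x = (f, y)" "f \<in> F" "y \<in> Y" using \<open>x \<in> X\<close> by blast
    have "\<sigma> i x \<in> X" using op_sys_in_X[OF that] .
    moreover have "\<psi> f \<in> F" using bij_betw_apply[OF \<psi>(1) x(2)] .
    ultimately show ?thesis
      using x \<psi>(2)[OF op_boundary_label_less_3[OF that(1) x(3)] x(2)]
      by (auto simp: lift_fst_def op_sys_Pair)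
  qed
  ultimately show ?thesis unfolding aut_def by (auto simp: lift_fst_def)
qed

lemma inj_on_lift_fst: "inj_on (lift_fst X) (aut F s)"
proof (rule inj_onI, rule ext)
  fix \<psi>1 \<psi>2 f assume \<psi>: "\<psi>1 \<in> aut F s" "\<psi>2 \<in> aut F s" "lift_fst X \<psi>1 = lift_fst X \<psi>2"
  obtain y where "y \<in> Y" using X_nonempty by blast
  show "\<psi>1 f = \<psi>2 f"
  proof (cases "f \<in> F")
    case True
    with \<open>y \<in> Y\<close> show ?thesis using fun_cong[OF \<psi>(3), of "(f, y)"] by (simp add: lift_fst_def)
  next
    case False
    with \<psi>(1,2) show ?thesis unfolding aut_def by simp
  qed
qed

text \<open>Inner adjacencies of O connect all classes and do not move the first component.\<close>
lemma class_preserving_aut_uniform: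
  assumes \<phi>: "\<phi> \<in> aut X \<sigma>" "preserves_classes X \<phi>" and "f \<in> F" "y0 \<in> Y" "y \<in> Y"
  shows "\<phi> (f, y) = (fst (\<phi> (f, y0)), y)"
proof -
  have "(y0, y) \<in> (op_inner_adj G t c outer)\<^sup>*"
    using Y_connected[OF \<open>y0 \<in> Y\<close> \<open>y \<in> Y\<close>] .
  then show ?thesis
  proof (induction rule: rtrancl_induct)
    case base
    have "snd (\<phi> (f, y0)) = y0"
      using \<phi>(2) \<open>f \<in> F\<close> \<open>y0 \<in> Y\<close> unfolding preserves_classes_def by auto
    then show ?case by (simp add: prod_eq_iff)
  next
    case (step y1 y2)
    then obtain i where i: "i < 3" "y1 \<in> Y" "op_nbr G t c i y1 = y2" "y2 \<noteq> outer"
      unfolding op_inner_adj_def by blast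
    then have "\<phi> (f, y2) = \<phi> (\<sigma> i (f, y1))" by (simp add: op_sys_Pair)
    also have "\<dots> = \<sigma> i (\<phi> (f, y1))"
      using \<phi>(1) i \<open>f \<in> F\<close> unfolding aut_def by blast
    also have "\<dots> = (fst (\<phi> (f, y0)), y2)" using step.IH i by (simp add: op_sys_Pair)
    finally show ?case .
  qed
qed

definition fst_action where
  "fst_action \<phi> f = (if f \<in> F then fst (\<phi> (f, SOME y. y \<in> Y)) else f)"

lemma class_preserving_aut_Pair:
  assumes "\<phi> \<in> aut X \<sigma>" "preserves_classes X \<phi>" "f \<in> F" "y \<in> Y"
  shows "\<phi> (f, y) = (fst_action \<phi> f, y)"
proof -
  have "(SOME y. y \<in> Y) \<in> Y" using Y_nonempty by (simp add: some_in_eq)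
  from class_preserving_aut_uniform[OF assms(1-3) this assms(4)] show ?thesis
    using assms(3) by (simp add: fst_action_def)
qed

lemma fst_action_aut:
  assumes \<phi>: "\<phi> \<in> aut X \<sigma>" "preserves_classes X \<phi>"
  shows "fst_action \<phi> \<in> aut F s"
proof -
  obtain y0 where y0: "y0 \<in> Y" using Y_nonempty by blast
  have \<phi>X: "bij_betw \<phi> X X" "\<And>i x. i < 3 \<Longrightarrow> x \<in> X \<Longrightarrow> \<phi> (\<sigma> i x) = \<sigma> i (\<phi> x)"
    using \<phi>(1) unfolding aut_def by blast+
  note \<phi>_Pair = class_preserving_aut_Pair[OF \<phi>]
  have into: "fst_action \<phi> ` F \<subseteq> F"
  proof
    fix g assume "g \<in> fst_action \<phi> ` F"
    then obtain f where "f \<in> F" "g = fst_action \<phi> f" by blast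
    with y0 bij_betw_apply[OF \<phi>X(1), of "(f, y0)"] show "g \<in> F" by (simp add: \<phi>_Pair)
  qed
  have "inj_on (fst_action \<phi>) F"
  proof (rule inj_onI)
    fix f g assume "f \<in> F" "g \<in> F" "fst_action \<phi> f = fst_action \<phi> g"
    with y0 have "\<phi> (f, y0) = \<phi> (g, y0)" by (simp add: \<phi>_Pair)
    with \<open>f \<in> F\<close> \<open>g \<in> F\<close> y0 show "f = g"
      using bij_betw_imp_inj_on[OF \<phi>X(1)] by (auto dest: inj_onD)
  qed
  with into have "bij_betw (fst_action \<phi>) F F"
    using endo_inj_surj[OF _ into] map_F unfolding is_map_def bij_betw_def by blast
  moreover have "fst_action \<phi> (s k f) = s k (fst_action \<phi> f)" if "k < 3" "f \<in> F" for k f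
  proof -
    obtain i y where iy: "i < 3" "y \<in> Y" "op_nbr G t c i y = outer"
      "op_boundary_label G t c outer v0 v1 v2 i y = k"
      using op_boundary_label_exists[OF \<open>k < 3\<close>] .
    have "s k f \<in> F" using map_F that unfolding is_map_def by blast
    with iy have "(fst_action \<phi> (s k f), y) = \<phi> (\<sigma> i (f, y))" by (simp add: \<phi>_Pair op_sys_Pair)
    also have "\<dots> = \<sigma> i (\<phi> (f, y))" using \<phi>X(2) iy that by simp
    also have "\<dots> = (s k (fst_action \<phi> f), y)" using iy that by (simp add: \<phi>_Pair op_sys_Pair)
    finally show ?thesis by simp
  qed
  ultimately show ?thesis unfolding aut_def by (simp add: fst_action_def)
qed

lemma class_preserving_aut_eq_lift:
  assumes \<phi>: "\<phi> \<in> aut X \<sigma>" "preserves_classes X \<phi>"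
  shows "\<phi> = lift_fst X (fst_action \<phi>)"
proof
  fix x show "\<phi> x = lift_fst X (fst_action \<phi>) x"
  proof (cases "x \<in> X")
    case True
    then show ?thesis using class_preserving_aut_Pair[OF \<phi>] by (auto simp: lift_fst_def)
  next
    case False
    moreover from this have "\<phi> x = x" using \<phi>(1) unfolding aut_def by blast
    ultimately show ?thesis by (simp add: lift_fst_def)
  qed
qed

lemma card_class_preserving_aut:
  "card {\<phi> \<in> aut X \<sigma>. preserves_classes X \<phi>} = card (aut F s)"
proof -
  have "{\<phi> \<in> aut X \<sigma>. preserves_classes X \<phi>} = lift_fst X ` aut F s"
    using lift_fst_aut fst_action_aut class_preserving_aut_eq_lift
    by (auto simp: preserves_classes_def lift_fst_def)
  then show ?thesis using card_image[OF inj_on_lift_fst] by simp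
qed

text \<open>The class of \<sigma> i x depends only on the class of x, so the chambers whose class \<phi>
  preserves form a set closed under adjacency.\<close>
lemma moves_all_classes:
  assumes \<phi>: "\<phi> \<in> aut X \<sigma>" "\<not> preserves_classes X \<phi>" and "x \<in> X"
  shows "snd (\<phi> x) \<noteq> snd x"
proof
  assume fixed: "snd (\<phi> x) = snd x"
  let ?S = "{x \<in> X. snd (\<phi> x) = snd x}"
  have "x' \<in> ?S" if "x' \<in> X" for x'
  proof (rule rtrancl_step_closed[OF X_connected[OF \<open>x \<in> X\<close> that]])
    show "x \<in> ?S" using fixed \<open>x \<in> X\<close> by blast
    fix i :: nat and z assume "i \<in> {0, 1, 2}" "z \<in> ?S"
    then have "i < 3" by auto
    with \<open>z \<in> ?S\<close> have "\<phi> (\<sigma> i z) = \<sigma> i (\<phi> z)" "\<sigma> i z \<in> X"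
      using \<phi>(1) op_sys_in_X unfolding aut_def by blast+
    with \<open>z \<in> ?S\<close> show "\<sigma> i z \<in> ?S" by (simp add: snd_op_sys)
  qed
  with \<phi>(2) show False unfolding preserves_classes_def by blast
qed

end

theorem lemma4:
  fixes F :: "'f set" and s :: "'f fsys"
    and G :: "'o set" and t :: "'o fsys" and c :: "'o set \<Rightarrow> nat"
    and outer v0 v1 v2 :: "'o set"
  assumes "polyhedral F s"
    and "c3_lsp_operation G t c outer v0 v1 v2"
  defines "Y \<equiv> op_chambers G t outer"
    and "s' \<equiv> op_sys s G t c outer v0 v1 v2"
  shows "(card (aut (F \<times> Y) s') > card (aut F s)
            \<longleftrightarrow> (\<exists>\<phi>\<in>aut (F \<times> Y) s'. \<exists>x\<in>F \<times> Y. snd (\<phi> x) \<noteq> snd x))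
       \<and> ((\<exists>\<phi>\<in>aut (F \<times> Y) s'. \<exists>x\<in>F \<times> Y. snd (\<phi> x) \<noteq> snd x)
            \<longleftrightarrow> (\<exists>\<phi>\<in>aut (F \<times> Y) s'. \<forall>x\<in>F \<times> Y. snd (\<phi> x) \<noteq> snd x))"
proof -
  interpret lsp_applied G t c outer v0 v1 v2 F s
    using assms(1,2) by (intro lsp_applied.intro c3_lsp.intro lsp_applied_axioms.intro)
  let ?C = "{\<phi> \<in> aut X \<sigma>. preserves_classes X \<phi>}"
  have "card ?C < card (aut X \<sigma>) \<longleftrightarrow> ?C \<noteq> aut X \<sigma>"
    using psubset_card_mono[OF finite_aut[OF finite_X], of ?C \<sigma>] by auto
  then have "card (aut F s) < card (aut X \<sigma>) \<longleftrightarrow> (\<exists>\<phi>\<in>aut X \<sigma>. \<not> preserves_classes X \<phi>)"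
    unfolding card_class_preserving_aut by blast
  moreover have "(\<exists>\<phi>\<in>aut X \<sigma>. \<not> preserves_classes X \<phi>) \<longleftrightarrow> (\<exists>\<phi>\<in>aut X \<sigma>. \<forall>x\<in>X. snd (\<phi> x) \<noteq> snd x)"
    using moves_all_classes X_nonempty unfolding preserves_classes_def by blast
  ultimately show ?thesis unfolding Y_def s'_def preserves_classes_def by blast
qed

end
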